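(* The iterated symmetric derivatives $\mathbf D_1,\mathbf D_2,\dots$, viewed as commuting linear operators on $\Lambda$, are algebraically independent over $\mathbb C$. That is, for every $r\ge1$ and every nonzero polynomial $P\in\mathbb C[T_1,\dots,T_r]$, the operator $P(\mathbf D_1,\dots,\mathbf D_r)$ is nonzero.
   Context: $\Lambda$ is the algebra of complex symmetric functions in $y_1,y_2,\dots$, with basis the monomial symmetric functions $m_\lambda$. For $i\ge1$, $\mathbf D_i$ is the linear operator with $\mathbf D_im_\lambda=i!\,m_{\lambda\setminus i}$ if $i$ is a part of $\lambda$ (one part $i$ removed), and $\mathbf D_im_\lambda=0$ otherwise. *)

theory Defs
  imports Complex_Main "HOL-Library.Multiset" "HOL-Library.Poly_Mapping"
begin

text \<open>Partitions are finite multisets of positive integers (the parts).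
An element of Lambda is identified with its coefficient function in the
monomial basis: f mu is the coefficient of m_mu.\<close>

type_synonym symfun = "nat multiset \<Rightarrow> complex"

definition is_partition :: "nat multiset \<Rightarrow> bool" where
  "is_partition lam \<longleftrightarrow> 0 \<notin># lam"

definition Lambda :: "symfun set" where
  "Lambda = {f. finite {lam. f lam \<noteq> 0} \<and> (\<forall>lam. f lam \<noteq> 0 \<longrightarrow> is_partition lam)}"

definition monomial_sym :: "nat multiset \<Rightarrow> symfun" where
  "monomial_sym lam = (\<lambda>mu. if mu = lam then 1 else 0)"

definition D :: "nat \<Rightarrow> symfun \<Rightarrow> symfun" where
  "D i f = (\<lambda>mu. \<Sum>lam\<in>{lam. f lam \<noteq> 0}.
      f lam * (if i \<in># lam then fact i * monomial_sym (lam - {#i#}) mu else 0))"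

text \<open>Polynomials in T_1..T_r: finitely supported maps from exponent vectors
(alpha, alpha i = exponent of T_i) to coefficients.
Applying the monomial T_1^a1 ... T_r^ar to D_1..D_r.\<close>
definition apply_monomial :: "nat \<Rightarrow> (nat \<Rightarrow>\<^sub>0 nat) \<Rightarrow> symfun \<Rightarrow> symfun" where
  "apply_monomial r alpha f = foldr (\<lambda>i g. (D i ^^ Poly_Mapping.lookup alpha i) g) [1..<Suc r] f"

definition eval_poly_D :: "nat \<Rightarrow> ((nat \<Rightarrow>\<^sub>0 nat) \<Rightarrow>\<^sub>0 complex) \<Rightarrow> symfun \<Rightarrow> symfun" where
  "eval_poly_D r P f = (\<lambda>mu. \<Sum>alpha\<in>Poly_Mapping.keys P. Poly_Mapping.lookup P alpha * apply_monomial r alpha f mu)"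

end

theory Submission
  imports Defs
begin

text \<open>Fix an exponent vector \<open>\<alpha>\<close> of \<open>P\<close> with nonzero coefficient and let \<open>\<lambda>\<close> be the partition
with \<open>\<alpha>\<^sub>i\<close> parts equal to \<open>i\<close>. A monomial \<open>D\<^sup>\<beta>\<close> sends \<open>m\<^sub>\<lambda>\<close> to a multiple of \<open>m\<^sub>\<mu>\<close>, where \<open>\<mu>\<close>
is \<open>\<lambda>\<close> with \<open>\<beta>\<^sub>i\<close> parts \<open>i\<close> removed, or to zero. Hence the coefficient of \<open>m\<^sub>\<emptyset>\<close> in
\<open>P(D) m\<^sub>\<lambda>\<close> comes from the single term \<open>\<beta> = \<alpha>\<close> and equals \<open>P\<^sub>\<alpha> \<Prod>\<^sub>i (i!)\<^bsup>\<alpha>\<^sub>i\<^esup> \<noteq> 0\<close>.\<close>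

lemma D_monomial_sym:
  "D i (\<lambda>mu. c * monomial_sym lam mu) =
   (\<lambda>mu. (if i \<in># lam then c * fact i else 0) * monomial_sym (lam - {#i#}) mu)"
proof (cases "c = 0")
  case False
  then have "{lam'. c * monomial_sym lam lam' \<noteq> 0} = {lam}"
    by (auto simp: monomial_sym_def split: if_splits)
  then show ?thesis
    by (auto simp: D_def monomial_sym_def fun_eq_iff)
qed (simp add: D_def)

lemma funpow_D_monomial_sym:
  "(D i ^^ k) (\<lambda>mu. c * monomial_sym lam mu) =
   (\<lambda>mu. (if replicate_mset k i \<subseteq># lam then c * fact i ^ k else 0)
        * monomial_sym (lam - replicate_mset k i) mu)"
proof (induction k)
  case (Suc k)
  have "i \<in># lam - replicate_mset k i \<longleftrightarrow> k < count lam i"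
    by (simp add: in_diff_count)
  moreover have "lam - replicate_mset k i - {#i#} = lam - replicate_mset (Suc k) i"
    by (simp add: multiset_eq_iff)
  moreover have "replicate_mset (Suc k) i \<subseteq># lam \<longleftrightarrow> k < count lam i"
    by (metis count_le_replicate_mset_subset_eq Suc_le_eq)
  moreover have "k < count lam i \<Longrightarrow> replicate_mset k i \<subseteq># lam"
    by (simp flip: count_le_replicate_mset_subset_eq)
  ultimately show ?case
    unfolding funpow.simps comp_apply Suc.IH D_monomial_sym
    by (auto simp: fun_eq_iff mult_ac simp del: replicate_mset_Suc)
qed simp

definition exponent_partition :: "(nat \<Rightarrow> nat) \<Rightarrow> nat list \<Rightarrow> nat multiset" where
  "exponent_partition a xs = (\<Sum>i\<leftarrow>xs. replicate_mset (a i) i)"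

lemma count_exponent_partition:
  "distinct xs \<Longrightarrow> count (exponent_partition a xs) j = (if j \<in> set xs then a j else 0)"
  by (induction xs) (auto simp: exponent_partition_def)

lemma foldr_funpow_D_monomial_sym:
  "foldr (\<lambda>i g. (D i ^^ a i) g) xs (\<lambda>mu. c * monomial_sym lam mu) =
   (\<lambda>mu. (if exponent_partition a xs \<subseteq># lam then c * (\<Prod>i\<leftarrow>xs. fact i ^ a i) else 0)
        * monomial_sym (lam - exponent_partition a xs) mu)"
proof (induction xs)
  case Nil
  then show ?case by (simp add: exponent_partition_def)
next
  case (Cons x xs)
  let ?M = "exponent_partition a xs" and ?R = "replicate_mset (a x) x"
  have partition_Cons: "exponent_partition a (x # xs) = ?R + ?M"
    by (simp add: exponent_partition_def)
  have "(?M \<subseteq># lam \<and> ?R \<subseteq># lam - ?M) \<longleftrightarrow> ?R + ?M \<subseteq># lam"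
    by (metis subset_mset.le_diff_conv2 mset_subset_eq_add_right subset_mset.order_trans)
  moreover have "lam - ?M - ?R = lam - (?R + ?M)"
    by (simp add: add.commute)
  ultimately show ?case
    unfolding foldr.simps comp_apply Cons.IH funpow_D_monomial_sym
    by (auto simp: partition_Cons fun_eq_iff mult_ac)
qed

lemma apply_monomial_monomial_sym_at_empty:
  "apply_monomial r alpha (monomial_sym lam) {#} =
   (if exponent_partition (Poly_Mapping.lookup alpha) [1..<Suc r] = lam
    then \<Prod>i\<leftarrow>[1..<Suc r]. fact i ^ Poly_Mapping.lookup alpha i else 0)"
proof -
  let ?M = "exponent_partition (Poly_Mapping.lookup alpha) [1..<Suc r]"
  have "apply_monomial r alpha (monomial_sym lam) =
    foldr (\<lambda>i g. (D i ^^ Poly_Mapping.lookup alpha i) g) [1..<Suc r] (\<lambda>mu. 1 * monomial_sym lam mu)"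
    by (simp add: apply_monomial_def)
  then have "apply_monomial r alpha (monomial_sym lam) {#} =
    (if ?M \<subseteq># lam then \<Prod>i\<leftarrow>[1..<Suc r]. fact i ^ Poly_Mapping.lookup alpha i else 0)
    * monomial_sym (lam - ?M) {#}"
    unfolding foldr_funpow_D_monomial_sym by (simp only: mult_1_left)
  moreover have "monomial_sym (lam - ?M) {#} = (if lam \<subseteq># ?M then 1 else 0)"
    by (auto simp: monomial_sym_def Diff_eq_empty_iff_mset)
  ultimately show ?thesis
    by (simp add: subset_mset.eq_iff conj_commute)
qed

lemma exponent_partition_inj:
  assumes "distinct xs" "Poly_Mapping.keys alpha \<subseteq> set xs" "Poly_Mapping.keys beta \<subseteq> set xs"
    and "exponent_partition (Poly_Mapping.lookup alpha) xs = exponent_partition (Poly_Mapping.lookup beta) xs"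
  shows "alpha = beta"
proof (rule poly_mapping_eqI)
  fix j
  show "Poly_Mapping.lookup alpha j = Poly_Mapping.lookup beta j"
  proof (cases "j \<in> set xs")
    case True
    then show ?thesis
      using arg_cong[OF assms(4), of "\<lambda>M. count M j"] by (simp add: assms(1) count_exponent_partition)
  next
    case False
    then show ?thesis
      using assms(2,3) by (metis in_keys_iff subsetD)
  qed
qed

lemma is_partition_exponent_partition:
  "0 \<notin> set xs \<Longrightarrow> distinct xs \<Longrightarrow> is_partition (exponent_partition a xs)"
  by (simp add: is_partition_def count_exponent_partition flip: count_eq_zero_iff)

lemma monomial_sym_in_Lambda:
  "is_partition lam \<Longrightarrow> monomial_sym lam \<in> Lambda"
  by (auto simp: Lambda_def monomial_sym_def finite_subset[of _ "{lam}"] split: if_splits)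

theorem mainTheorem8:
  fixes r :: nat and P :: "(nat \<Rightarrow>\<^sub>0 nat) \<Rightarrow>\<^sub>0 complex"
  assumes "r \<ge> 1"
    and "P \<noteq> 0"
    and "\<forall>alpha\<in>Poly_Mapping.keys P. Poly_Mapping.keys alpha \<subseteq> {1..r}"
  shows "\<exists>f\<in>Lambda. eval_poly_D r P f \<noteq> (\<lambda>_. 0)"
proof -
  obtain a0 where a0: "a0 \<in> Poly_Mapping.keys P"
    using assms(2) by (metis all_not_in_conv keys_eq_empty)
  define lam0 where "lam0 = exponent_partition (Poly_Mapping.lookup a0) [1..<Suc r]"
  let ?f = "monomial_sym lam0"
  have "apply_monomial r alpha ?f {#} = 0" if "alpha \<in> Poly_Mapping.keys P" "alpha \<noteq> a0" for alpha
  proof -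
    have "exponent_partition (Poly_Mapping.lookup alpha) [1..<Suc r] \<noteq> lam0"
      using that a0 assms(3) exponent_partition_inj[of "[1..<Suc r]"]
      unfolding lam0_def by (metis atLeastLessThanSuc_atLeastAtMost distinct_upt set_upt)
    then show ?thesis
      by (simp add: apply_monomial_monomial_sym_at_empty)
  qed
  then have "eval_poly_D r P ?f {#} = Poly_Mapping.lookup P a0 * apply_monomial r a0 ?f {#}"
    unfolding eval_poly_D_def by (simp add: sum.remove[OF finite_keys a0])
  also have "\<dots> \<noteq> 0"
    using a0 by (auto simp: apply_monomial_monomial_sym_at_empty lam0_def in_keys_iff prod_list_zero_iff)
  finally have "eval_poly_D r P ?f \<noteq> (\<lambda>_. 0)"
    by metis
  moreover have "?f \<in> Lambda"
    by (simp add: lam0_def monomial_sym_in_Lambda is_partition_exponent_partition)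
  ultimately show ?thesis
    by (rule bexI)
qed

end
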